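(* For both the JC model and the K2P model, the linear polynomial $f=q_{GGGG}+q_{GTGT}-q_{GGTT}-q_{GTTG}$ satisfies $f\in\mathcal{I}(V_{T_{12|34}}\ast V_{T_{14|23}})\setminus\mathcal{I}(V_{T_{13|24}})$.
   Context: $T_{12|34}$, $T_{13|24}$, $T_{14|23}$ denote the three unrooted binary trees on leaves $\{1,2,3,4\}$, indexed by their nontrivial split; $\Sigma(T)$ is the set of all splits of $T$ (four trivial plus the nontrivial one). With $G=\mathbb{Z}_2\times\mathbb{Z}_2$ and nucleotide labels $A=(0,0)$, $C=(0,1)$, $G=(1,0)$, $T=(1,1)$, the K3P model on $T$ in Fourier coordinates $q_{g_1g_2g_3g_4}$ ($g_i\in G$) is $q_{g_1g_2g_3g_4}=\prod_{A|B\in\Sigma(T)}a^{A|B}_{\sum_{i\in A}g_i}$ if $\sum_i g_i=0$ and $0$ otherwise; K2P imposes $a^e_G=a^e_T$ and JC imposes $a^e_C=a^e_G=a^e_T$ for all splits $e$. $V_T$ is the Zariski closure in $\mathbb{P}^{255}$ of the image for complex parameters; $V\ast W$ is the join (closure of all lines meeting $V$ and $W$); $\mathcal{I}(V)$ is the ideal of polynomials in the $q$'s vanishing on $V$. *)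

theory Defs
  imports Complex_Main "HOL-Library.Poly_Mapping"
begin

text \<open>Nucleotides, identified with Z2 x Z2: A=(0,0), C=(0,1), G=(1,0), T=(1,1).\<close>
datatype nuc = A | C | G | T

fun nuc_pair :: "nuc \<Rightarrow> bool \<times> bool" where
  "nuc_pair A = (False, False)"
| "nuc_pair C = (False, True)"
| "nuc_pair G = (True, False)"
| "nuc_pair T = (True, True)"

definition pair_nuc :: "bool \<times> bool \<Rightarrow> nuc" where
  "pair_nuc p = (THE n. nuc_pair n = p)"

definition nadd :: "nuc \<Rightarrow> nuc \<Rightarrow> nuc" where
  "nadd x y = pair_nuc (fst (nuc_pair x) \<noteq> fst (nuc_pair y), snd (nuc_pair x) \<noteq> snd (nuc_pair y))"

text \<open>Fourier coordinates q_{g1 g2 g3 g4} are indexed by 4-tuples of group elements.\<close>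
type_synonym idx = "nuc \<times> nuc \<times> nuc \<times> nuc"

fun leaf :: "idx \<Rightarrow> nat \<Rightarrow> nuc" where
  "leaf (g1, g2, g3, g4) i = (if i = 1 then g1 else if i = 2 then g2 else if i = 3 then g3 else g4)"

definition leaves :: "nat set" where "leaves = {1, 2, 3, 4}"

definition gsum :: "nat set \<Rightarrow> idx \<Rightarrow> nuc" where
  "gsum S g = foldr nadd (map (leaf g) (filter (\<lambda>i. i \<in> S) [1, 2, 3, 4])) A"

definition split_of :: "nat set \<Rightarrow> nat set set" where
  "split_of S = {S, leaves - S}"

text \<open>A tree on 4 leaves is given by (one side X of) its nontrivial split; the sides
  listed below are one side of each of the five splits in Sigma(T).\<close>
definition split_sides :: "nat set \<Rightarrow> nat set set" where
  "split_sides X = {{1}, {2}, {3}, {4}, X}"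

definition Sigma_T :: "nat set \<Rightarrow> nat set set set" where
  "Sigma_T X = split_of ` split_sides X"

text \<open>Parametrisation of the K3P model in Fourier coordinates; the parameters are
  a e g = a^e_g for a split e and a group element g.\<close>
definition param :: "nat set \<Rightarrow> (nat set set \<Rightarrow> nuc \<Rightarrow> complex) \<Rightarrow> idx \<Rightarrow> complex" where
  "param X a g = (if gsum leaves g = A
                   then (\<Prod>S\<in>split_sides X. a (split_of S) (gsum S g)) else 0)"

datatype model = K3P | K2P | JC

definition admissible :: "model \<Rightarrow> (nat set set \<Rightarrow> nuc \<Rightarrow> complex) \<Rightarrow> bool" where
  "admissible M a = (case M of
      K3P \<Rightarrow> True
    | K2P \<Rightarrow> (\<forall>e. a e G = a e T)
    | JC \<Rightarrow> (\<forall>e. a e C = a e G \<and> a e G = a e T))"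

type_synonym qpoly = "(idx \<Rightarrow>\<^sub>0 nat) \<Rightarrow>\<^sub>0 complex"

definition peval :: "qpoly \<Rightarrow> (idx \<Rightarrow> complex) \<Rightarrow> complex" where
  "peval p x = (\<Sum>mon\<in>Poly_Mapping.keys p. Poly_Mapping.lookup p mon * (\<Prod>w\<in>Poly_Mapping.keys (mon::idx \<Rightarrow>\<^sub>0 nat). x w ^ Poly_Mapping.lookup mon w))"

definition qvar :: "idx \<Rightarrow> qpoly" where
  "qvar v = Poly_Mapping.single (Poly_Mapping.single v 1) 1"

definition vanishing_ideal :: "(idx \<Rightarrow> complex) set \<Rightarrow> qpoly set" where
  "vanishing_ideal S = {p. \<forall>x\<in>S. peval p x = 0}"

definition zariski_closure :: "(idx \<Rightarrow> complex) set \<Rightarrow> (idx \<Rightarrow> complex) set" where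
  "zariski_closure S = {x. \<forall>p\<in>vanishing_ideal S. peval p x = 0}"

text \<open>Affine cone (in C^256) of the projective variety V_T of model M.\<close>
definition V_T :: "model \<Rightarrow> nat set \<Rightarrow> (idx \<Rightarrow> complex) set" where
  "V_T M X = zariski_closure {param X a | a. admissible M a}"

text \<open>Affine cone of the join of two projective varieties, given by their affine cones.\<close>
definition join :: "(idx \<Rightarrow> complex) set \<Rightarrow> (idx \<Rightarrow> complex) set \<Rightarrow> (idx \<Rightarrow> complex) set" where
  "join V W = zariski_closure {(\<lambda>i. x i + y i) | x y. x \<in> V \<and> y \<in> W}"

end

theory Submission
  imports Defs
begin

text \<open>In Fourier coordinates the four monomials of f are products of five edge parameters,
  one per split. Under T_12|34 and T_14|23, the entries on the leaf edges and on the internal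
  edge (labelled by g1+g2, resp. g1+g4) match in pairs once the labels G and T are identified,
  so f vanishes on both varieties, and on their join because f is linear. Under T_13|24 the
  internal edge carries A for the positive terms and C for the negative ones, so the point
  with every parameter equal to 2 on A and 1 elsewhere (a JC point) gives f = 2.\<close>

lemma peval_eq_sum_superset:
  assumes "finite S" "Poly_Mapping.keys p \<subseteq> S"
  shows "peval p x = (\<Sum>mon\<in>S. Poly_Mapping.lookup p mon *
                        (\<Prod>w\<in>Poly_Mapping.keys mon. x w ^ Poly_Mapping.lookup mon w))"
  unfolding peval_def
  by (rule sum.mono_neutral_left) (use assms in \<open>auto simp: in_keys_iff\<close>)

lemma peval_add: "peval (p + q) x = peval p x + peval q x"
proof -
  let ?S = "Poly_Mapping.keys p \<union> Poly_Mapping.keys q"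
  have "Poly_Mapping.keys (p + q) \<subseteq> ?S"
    using keys_add[of p q] by auto
  then show ?thesis
    by (simp add: peval_eq_sum_superset[of ?S] lookup_add distrib_right sum.distrib)
qed

lemma peval_diff: "peval (p - q) x = peval p x - peval q x"
proof -
  let ?S = "Poly_Mapping.keys p \<union> Poly_Mapping.keys q"
  have "Poly_Mapping.keys (p - q) \<subseteq> ?S"
    using keys_diff[of p q] by auto
  then show ?thesis
    by (simp add: peval_eq_sum_superset[of ?S] lookup_minus left_diff_distrib sum_subtractf)
qed

lemma peval_qvar: "peval (qvar v) x = x v"
  unfolding peval_def qvar_def by simp

lemma subset_zariski_closure: "S \<subseteq> zariski_closure S"
  unfolding zariski_closure_def vanishing_ideal_def by auto

lemma vanishing_ideal_zariski_closure: "vanishing_ideal (zariski_closure S) = vanishing_ideal S"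
proof
  show "vanishing_ideal (zariski_closure S) \<subseteq> vanishing_ideal S"
    using subset_zariski_closure unfolding vanishing_ideal_def by blast
  show "vanishing_ideal S \<subseteq> vanishing_ideal (zariski_closure S)"
    unfolding zariski_closure_def vanishing_ideal_def by auto
qed

lemma additive_in_vanishing_ideal_join:
  assumes "\<And>x y. peval p (\<lambda>i. x i + y i) = peval p x + peval p y"
    and "p \<in> vanishing_ideal V" "p \<in> vanishing_ideal W"
  shows "p \<in> vanishing_ideal (join V W)"
  using assms unfolding join_def vanishing_ideal_zariski_closure
  by (auto simp: vanishing_ideal_def)

lemma pair_nuc_simps [simp]:
  "pair_nuc (False, False) = A" "pair_nuc (False, True) = C"
  "pair_nuc (True, False) = G" "pair_nuc (True, True) = T"
  unfolding pair_nuc_def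
  by (rule the_equality; (simp; fail)?; case_tac n; simp)+

definition f_poly :: qpoly where
  "f_poly = qvar (G, G, G, G) + qvar (G, T, G, T) - qvar (G, G, T, T) - qvar (G, T, T, G)"

lemma peval_f_poly:
  "peval f_poly x = x (G, G, G, G) + x (G, T, G, T) - x (G, G, T, T) - x (G, T, T, G)"
  by (simp add: f_poly_def peval_add peval_diff peval_qvar)

lemma prod_split_sides:
  "(\<Prod>S\<in>split_sides X. h S) = h {1} * h {2} * h {3} * h {4} * h X"
  if "X \<in> {{1, 2}, {1, 3}, {1, 4}}"
  using that unfolding split_sides_def by (auto simp: insert_commute mult_ac)

lemma nadd_A_right [simp]: "nadd x A = x"
  by (cases x) (simp_all add: nadd_def)

lemma gsum_singleton [simp]: "i \<in> leaves \<Longrightarrow> gsum {i} g = leaf g i"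
  by (cases g) (auto simp: gsum_def leaves_def)

lemma param_eq_prod:
  assumes "X \<in> {{1, 2}, {1, 3}, {1, 4}}" and "gsum leaves g = A"
  shows "param X a g = a (split_of {1}) (leaf g 1) * a (split_of {2}) (leaf g 2)
           * a (split_of {3}) (leaf g 3) * a (split_of {4}) (leaf g 4) * a (split_of X) (gsum X g)"
  using assms by (simp add: param_def prod_split_sides leaves_def)

lemma peval_f_poly_param_eq_0:
  assumes "\<And>e. a e T = a e G" and "X = {1, 2} \<or> X = {1, 4}"
  shows "peval f_poly (param X a) = 0"
  using assms(2) by (auto simp: peval_f_poly param_eq_prod gsum_def leaves_def nadd_def assms(1))

lemma f_poly_in_vanishing_ideal_V_T:
  assumes "M = JC \<or> M = K2P" and "X = {1, 2} \<or> X = {1, 4}"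
  shows "f_poly \<in> vanishing_ideal (V_T M X)"
proof -
  have "peval f_poly (param X a) = 0" if "admissible M a" for a
  proof (rule peval_f_poly_param_eq_0[OF _ assms(2)])
    show "a e T = a e G" for e
      using assms(1) that by (auto simp: admissible_def)
  qed
  then show ?thesis
    unfolding V_T_def vanishing_ideal_zariski_closure by (auto simp: vanishing_ideal_def)
qed

definition diag_label :: "nuc \<Rightarrow> complex" where
  "diag_label g = (if g = A then 2 else 1)"

lemma peval_f_poly_param_13_diag_label: "peval f_poly (param {1, 3} (\<lambda>_. diag_label)) = 2"
  by (simp add: peval_f_poly param_eq_prod gsum_def leaves_def nadd_def diag_label_def)

lemma f_poly_notin_vanishing_ideal_V_T_13: "f_poly \<notin> vanishing_ideal (V_T M {1, 3})"
proof
  have "admissible M (\<lambda>_. diag_label)"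
    by (cases M) (auto simp: admissible_def diag_label_def)
  then have "param {1, 3} (\<lambda>_. diag_label) \<in> V_T M {1, 3}"
    unfolding V_T_def by (intro subsetD[OF subset_zariski_closure]) blast
  moreover assume "f_poly \<in> vanishing_ideal (V_T M {1, 3})"
  ultimately show False
    using peval_f_poly_param_13_diag_label unfolding vanishing_ideal_def by fastforce
qed

theorem lemma4:
  fixes M :: model
  assumes "M = JC \<or> M = K2P"
  defines "f \<equiv> qvar (G, G, G, G) + qvar (G, T, G, T) - qvar (G, G, T, T) - qvar (G, T, T, G)"
  shows "f \<in> vanishing_ideal (join (V_T M {1, 2}) (V_T M {1, 4}))
         \<and> f \<notin> vanishing_ideal (V_T M {1, 3})"
proof -
  have "f = f_poly"
    unfolding f_def f_poly_def ..
  moreover have "f_poly \<in> vanishing_ideal (join (V_T M {1, 2}) (V_T M {1, 4}))"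
  proof (rule additive_in_vanishing_ideal_join)
    show "peval f_poly (\<lambda>i. x i + y i) = peval f_poly x + peval f_poly y" for x y
      by (simp add: peval_f_poly)
    show "f_poly \<in> vanishing_ideal (V_T M {1, 2})" "f_poly \<in> vanishing_ideal (V_T M {1, 4})"
      using f_poly_in_vanishing_ideal_V_T assms(1) by blast+
  qed
  ultimately show ?thesis
    using f_poly_notin_vanishing_ideal_V_T_13 by simp
qed

end
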